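(* Let $m\ge 2$, $k\in\mathbb N_0$, $0\le s\le m$ with $s+k\ge 1$. Then $$\mathcal{P}_k^s=\mathrm{Ker}_k^s\partial^+\oplus(\mathbf{x}\bullet)\,\mathrm{Ker}_{k-1}^{s+1}\partial^+,$$ and the projection of $\mathcal{P}_k^s$ onto $\mathrm{Ker}_k^s\partial^+$ along this decomposition is $P^+=-(s+k)^{-1}\partial^+(\mathbf{x}\bullet)$.
   Context: $\mathcal{C}\ell_m$ denotes either the real Clifford algebra $\mathbb{R}_{0,m}$ or the complex Clifford algebra $\mathbb{C}_m$ generated by the standard basis $e_1,\dots,e_m$ of $\mathbb{R}^m$ with relations $e_ie_j+e_je_i=-2\delta_{ij}$; $\mathcal{C}\ell_m=\bigoplus_{s=0}^m\mathcal{C}\ell_m^s$, where $\mathcal{C}\ell_m^s$ is the space of $s$-vectors. A point $\mathbf{x}\in\mathbb R^m$ is identified with the 1-vector $\sum_j x_je_j$. For a 1-vector $u$ and an $s$-vector $v$, $u\bullet v=\frac12(uv-(-1)^svu)$ and $u\wedge v=\frac12(uv+(-1)^svu)$, extended linearly in $v$; $(\mathbf{x}\bullet)$ is the pointwise operator $P\mapsto\mathbf x\bullet P$. $\mathcal P_k^s$ is the space of $k$-homogeneous $\mathcal C\ell_m^s$-valued polynomials on $\mathbb R^m$ (zero if $k<0$ or $s>m$). $\partial^+P=\sum_je_j\wedge\partial_{x_j}P$ and $\mathrm{Ker}_k^s\partial^+=\{P\in\mathcal P_k^s:\partial^+P=0\}$. *)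

theory Defs
  imports Main
begin

text \<open>Clifford algebra Cl_m (real R_{0,m} or complex C_m; coefficients in a field of
characteristic 0) in the basis of blades e_A, A a subset of {0..<m} (index j stands for e_(j+1)).
A multivector is its coefficient function A \<mapsto> coefficient of e_A.
A Cl_m-valued polynomial on R^m is its coefficient function
(alpha, A) \<mapsto> coefficient of x^alpha e_A, alpha a multi-index.\<close>

type_synonym 'a mvec = "nat set \<Rightarrow> 'a"
type_synonym 'a cpoly = "(nat \<Rightarrow> nat) \<Rightarrow> nat set \<Rightarrow> 'a"

text \<open>Sign in e_A e_B = blade_sign A B e_(A symdiff B), using e_i e_j = - e_j e_i (i \<noteq> j), e_i^2 = -1.\<close>
definition blade_sign :: "nat set \<Rightarrow> nat set \<Rightarrow> 'a::field_char_0" where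
  "blade_sign A B = (-1) ^ (card {(a, b). a \<in> A \<and> b \<in> B \<and> b < a} + card (A \<inter> B))"

definition clmul :: "nat \<Rightarrow> 'a::field_char_0 mvec \<Rightarrow> 'a mvec \<Rightarrow> 'a mvec" where
  "clmul m u v = (\<lambda>C. \<Sum>A\<in>Pow {..<m}. \<Sum>B\<in>Pow {..<m}.
      if (A - B) \<union> (B - A) = C then blade_sign A B * u A * v B else 0)"

definition evec :: "nat \<Rightarrow> 'a::field_char_0 mvec" where
  "evec j = (\<lambda>A. if A = {j} then 1 else 0)"

definition grade :: "nat \<Rightarrow> 'a::field_char_0 mvec \<Rightarrow> 'a mvec" where
  "grade s v = (\<lambda>A. if card A = s then v A else 0)"

definition cdot :: "nat \<Rightarrow> 'a::field_char_0 mvec \<Rightarrow> 'a mvec \<Rightarrow> 'a mvec" where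
  "cdot m u v = (\<lambda>C. \<Sum>s\<le>m. (clmul m u (grade s v) C - (-1) ^ s * clmul m (grade s v) u C) / 2)"

definition cwedge :: "nat \<Rightarrow> 'a::field_char_0 mvec \<Rightarrow> 'a mvec \<Rightarrow> 'a mvec" where
  "cwedge m u v = (\<lambda>C. \<Sum>s\<le>m. (clmul m u (grade s v) C + (-1) ^ s * clmul m (grade s v) u C) / 2)"

definition pdx :: "nat \<Rightarrow> 'a::field_char_0 cpoly \<Rightarrow> 'a cpoly" where
  "pdx j P = (\<lambda>\<alpha> A. of_nat (Suc (\<alpha> j)) * P (\<alpha>(j := Suc (\<alpha> j))) A)"

definition dplus :: "nat \<Rightarrow> 'a::field_char_0 cpoly \<Rightarrow> 'a cpoly" where
  "dplus m P = (\<lambda>\<alpha>. \<lambda>C. \<Sum>j<m. cwedge m (evec j) (pdx j P \<alpha>) C)"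

text \<open>(x\<bullet>)P = sum_j x_j (e_j \<bullet> P).\<close>
definition xdot :: "nat \<Rightarrow> 'a::field_char_0 cpoly \<Rightarrow> 'a cpoly" where
  "xdot m P = (\<lambda>\<alpha>. \<lambda>C. \<Sum>j\<in>{j. j < m \<and> 0 < \<alpha> j}. cdot m (evec j) (P (\<alpha>(j := \<alpha> j - 1))) C)"

text \<open>P_k^s: k-homogeneous Cl_m^s-valued polynomials on R^m (zero space if k < 0 or s > m).\<close>
definition hpoly :: "nat \<Rightarrow> int \<Rightarrow> nat \<Rightarrow> 'a::field_char_0 cpoly set" where
  "hpoly m k s = {P. \<forall>\<alpha> A. P \<alpha> A \<noteq> 0 \<longrightarrow>
      0 \<le> k \<and> (\<forall>i. m \<le> i \<longrightarrow> \<alpha> i = 0) \<and> (\<Sum>i<m. \<alpha> i) = nat k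
      \<and> A \<subseteq> {..<m} \<and> card A = s}"

definition kerplus :: "nat \<Rightarrow> int \<Rightarrow> nat \<Rightarrow> 'a::field_char_0 cpoly set" where
  "kerplus m k s = {P \<in> hpoly m k s. dplus m P = (\<lambda>\<alpha> A. 0)}"

end

theory Submission
  imports Defs
begin

(* Everything follows from three operator identities, proved in coordinates (coefficient of
   x^\<alpha> e_C) after computing Clifford products with a basis vector e_j:
     (i)   \<partial>\<^sup>+ \<partial>\<^sup>+ = 0 and (ii) (x\<bullet>)(x\<bullet>) = 0, because the contributions of the index pairs
           (i, j) and (j, i) cancel by anticommutation of the generators;
     (iii) \<partial>\<^sup>+(x\<bullet>) + (x\<bullet>)\<partial>\<^sup>+ = -(s + k) on P_k^s (an Euler-type identity: the diagonal terms
           contribute \<alpha>_j + [j \<in> C] each, the off-diagonal terms cancel).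
   With n = s + k \<noteq> 0 and P \<in> P_k^s, (iii) gives P = P\<^sup>+ + (x\<bullet>)R where P\<^sup>+ = -\<partial>\<^sup>+(x\<bullet>)P/n and
   R = -\<partial>\<^sup>+P/n; both lie in Ker \<partial>\<^sup>+ by (i).  If Q \<in> Ker \<partial>\<^sup>+ is of the form (x\<bullet>)R, then by (ii)
   and (iii) -nQ = \<partial>\<^sup>+(x\<bullet>)Q + (x\<bullet>)\<partial>\<^sup>+Q = 0, so the sum is direct. *)

(* Sign picked up when the generator e_j is moved past those generators of the blade e_C
     whose index is smaller than j. *)
definition shuffle_sign :: "nat \<Rightarrow> nat set \<Rightarrow> 'a::field_char_0" where
  "shuffle_sign j C = (-1) ^ card {b\<in>C. b < j}"

lemma symdiff_eq_iff: "((A - B) \<union> (B - A) = C) \<longleftrightarrow> (B = (C - A) \<union> (A - C))"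
  by blast

lemma clmul_evec_left:
  "clmul m (evec j) w C = (if j < m \<and> C \<subseteq> {..<m} then
     blade_sign {j} ((C - {j}) \<union> ({j} - C)) * w ((C - {j}) \<union> ({j} - C)) else (0::'a::field_char_0))"
proof -
  let ?B0 = "(C - {j}) \<union> ({j} - C)"
  have only_j: "clmul m (evec j) w C = (\<Sum>A\<in>Pow {..<m}. if A = {j} then
      (\<Sum>B\<in>Pow {..<m}. if ({j} - B) \<union> (B - {j}) = C then blade_sign {j} B * w B else 0) else 0)"
    unfolding clmul_def evec_def
  proof (rule sum.cong)
    fix A assume "A \<in> Pow {..<m}"
    show "(\<Sum>B\<in>Pow {..<m}. if (A - B) \<union> (B - A) = C then blade_sign A B * (if A = {j} then 1 else 0) * w B else 0) =
      (if A = {j} then (\<Sum>B\<in>Pow {..<m}. if ({j} - B) \<union> (B - {j}) = C then blade_sign {j} B * w B else (0::'a)) else 0)"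
      by (cases "A = {j}") (simp_all cong: if_cong)
  qed simp
  have solve_B: "(\<Sum>B\<in>Pow {..<m}. if ({j} - B) \<union> (B - {j}) = C then blade_sign {j} B * w B else (0::'a))
     = (\<Sum>B\<in>Pow {..<m}. if B = ?B0 then blade_sign {j} B * w B else 0)"
    by (rule sum.cong) (simp_all only: symdiff_eq_iff)
  have pick_B: "(\<Sum>B\<in>Pow {..<m}. if B = ?B0 then blade_sign {j} B * w B else (0::'a)) =
     (if ?B0 \<in> Pow {..<m} then blade_sign {j} ?B0 * w ?B0 else 0)"
    by (rule sum.delta) simp
  have pick_A: "(\<Sum>A\<in>Pow {..<m}. if A = {j} then (X::'a) else 0) = (if {j} \<in> Pow {..<m} then X else 0)" for X
    by (rule sum.delta) simp
  have in_range: "j < m \<Longrightarrow> ?B0 \<in> Pow {..<m} \<longleftrightarrow> C \<subseteq> {..<m}" by auto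
  show ?thesis unfolding only_j solve_B pick_B pick_A using in_range by auto
qed

lemma clmul_evec_right:
  "clmul m w (evec j) C = (if j < m \<and> C \<subseteq> {..<m} then
     blade_sign ((C - {j}) \<union> ({j} - C)) {j} * w ((C - {j}) \<union> ({j} - C)) else (0::'a::field_char_0))"
proof -
  let ?B0 = "(C - {j}) \<union> ({j} - C)"
  have pick_B: "(\<Sum>B\<in>Pow {..<m}. if B = {j} then (X B::'a) else 0) = (if {j} \<in> Pow {..<m} then X {j} else 0)" for X
    by (rule sum.delta) simp
  have only_A: "clmul m w (evec j) C = (\<Sum>A\<in>Pow {..<m}. if A = ?B0 then
      (if j < m then blade_sign A {j} * w A else 0) else 0)"
    unfolding clmul_def evec_def
  proof (rule sum.cong)
    fix A assume "A \<in> Pow {..<m}"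
    have "(\<Sum>B\<in>Pow {..<m}. if (A - B) \<union> (B - A) = C then blade_sign A B * w A * (if B = {j} then 1 else 0) else 0) =
       (\<Sum>B\<in>Pow {..<m}. if B = {j} then (if (A - B) \<union> (B - A) = C then blade_sign A B * w A else 0) else (0::'a))"
      by (rule sum.cong) (simp_all cong: if_cong)
    also have "\<dots> = (if A = ?B0 then (if j < m then blade_sign A {j} * w A else 0) else 0)"
      unfolding pick_B by (auto simp only: symdiff_eq_iff) auto
    finally show "(\<Sum>B\<in>Pow {..<m}. if (A - B) \<union> (B - A) = C then blade_sign A B * w A * (if B = {j} then 1 else 0) else 0) =
      (if A = ?B0 then (if j < m then blade_sign A {j} * w A else 0) else 0)" .
  qed simp
  have pick_A: "(\<Sum>A\<in>Pow {..<m}. if A = ?B0 then (if j < m then blade_sign A {j} * w A else 0) else (0::'a)) =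
     (if ?B0 \<in> Pow {..<m} then (if j < m then blade_sign ?B0 {j} * w ?B0 else 0) else 0)"
    by (rule sum.delta) simp
  have in_range: "j < m \<Longrightarrow> ?B0 \<in> Pow {..<m} \<longleftrightarrow> C \<subseteq> {..<m}" by auto
  show ?thesis unfolding only_A pick_A using in_range by auto
qed

lemma card_pairs_below: "card {(a,b). a\<in>{j} \<and> b\<in>B \<and> b<a} = card {b\<in>B. b<(j::nat)}"
proof -
  have "{(a,b). a\<in>{j} \<and> b\<in>B \<and> b<a} = (\<lambda>b. (j,b)) ` {b\<in>B. b<j}" by auto
  moreover have "inj_on (\<lambda>b. (j,b)) {b\<in>B. b<j}" by (auto simp: inj_on_def)
  ultimately show ?thesis by (simp add: card_image)
qed

lemma card_pairs_above: "card {(a,b). a\<in>B \<and> b\<in>{j} \<and> b<a} = card {a\<in>B. (j::nat)<a}"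
proof -
  have "{(a,b). a\<in>B \<and> b\<in>{j} \<and> b<a} = (\<lambda>a. (a,j)) ` {a\<in>B. j<a}" by auto
  moreover have "inj_on (\<lambda>a. (a,j)) {a\<in>B. j<a}" by (auto simp: inj_on_def)
  ultimately show ?thesis by (simp add: card_image)
qed

lemma blade_sign_evec_left: "blade_sign {j} B = (if j\<in>B then -1 else 1) * (shuffle_sign j B :: 'a::field_char_0)"
  unfolding blade_sign_def shuffle_sign_def card_pairs_below
  by (cases "j \<in> B") (simp_all add: power_add)

lemma card_split_at: "finite B \<Longrightarrow> card B = card {b\<in>B. b<j} + card {a\<in>B. (j::nat)<a} + (if j\<in>B then 1 else 0)"
proof -
  assume f: "finite B"
  have e: "B = ({b\<in>B. b<j} \<union> {a\<in>B. j<a}) \<union> (B \<inter> {j})" by auto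
  have "card B = card ({b\<in>B. b<j} \<union> {a\<in>B. j<a}) + card (B \<inter> {j})"
    by (subst e, rule card_Un_disjoint) (use f in auto)
  also have "card ({b\<in>B. b<j} \<union> {a\<in>B. j<a}) = card {b\<in>B. b<j} + card {a\<in>B. j<a}"
    by (rule card_Un_disjoint) (use f in auto)
  also have "card (B \<inter> {j}) = (if j\<in>B then 1 else 0)" by auto
  finally show ?thesis .
qed

lemma blade_sign_evec_right: "finite B \<Longrightarrow> (-1)^card B * blade_sign B {j} = (shuffle_sign j B :: 'a::field_char_0)"
proof -
  assume f: "finite B"
  let ?l = "card {b\<in>B. b<j}" and ?g = "card {a\<in>B. j<a}" and ?e = "(if j\<in>B then 1 else 0) :: nat"
  have cB: "card B = ?l + ?g + ?e" by (rule card_split_at[OF f])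
  have ci: "card (B \<inter> {j}) = ?e" by auto
  have "(-1::'a)^card B * blade_sign B {j} = (-1)^(?l + 2*(?g + ?e))"
    unfolding blade_sign_def card_pairs_above cB ci by (simp add: power_add algebra_simps)
  also have "\<dots> = (-1)^?l" by (simp add: power_add power_mult)
  finally show ?thesis by (simp add: shuffle_sign_def)
qed

lemma shuffle_sign_insert_self: "shuffle_sign j (insert j C) = shuffle_sign j C"
  unfolding shuffle_sign_def by (rule arg_cong[where f="\<lambda>n. (-1)^card n"]) auto

lemma shuffle_sign_remove_self: "shuffle_sign j (C - {j}) = shuffle_sign j C"
  unfolding shuffle_sign_def by (rule arg_cong[where f="\<lambda>n. (-1)^card n"]) auto

lemma sum_over_grades:
  assumes "card B \<le> m"
  shows "(\<Sum>s\<le>m. (a * grade s v B + c * (-1)^s * (b * grade s v B)) / 2) =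
     (a * v B + c * (-1)^card B * (b * v B)) / (2::'a::field_char_0)"
proof -
  have "(\<Sum>s\<le>m. (a * grade s v B + c * (-1)^s * (b * grade s v B)) / 2) =
     (\<Sum>s\<le>m. if s = card B then (a * v B + c * (-1)^s * (b * v B)) / (2::'a) else 0)"
    by (rule sum.cong) (auto simp: grade_def)
  also have "\<dots> = (a * v B + c * (-1)^card B * (b * v B)) / 2"
    by (subst sum.delta) (use assms in auto)
  finally show ?thesis .
qed

lemma cdot_evec: "cdot m (evec j) v C =
   (if j < m \<and> C \<subseteq> {..<m} \<and> j \<notin> C then - shuffle_sign j C * v (insert j C) else (0::'a::field_char_0))"
proof (cases "j < m \<and> C \<subseteq> {..<m}")
  case True
  let ?B = "(C - {j}) \<union> ({j} - C)"
  have sub: "?B \<subseteq> {..<m}" using True by auto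
  hence fin: "finite ?B" by (rule finite_subset) simp
  have cb: "card ?B \<le> m" using card_mono[OF _ sub] by simp
  have "cdot m (evec j) v C = (\<Sum>s\<le>m. (blade_sign {j} ?B * grade s v ?B + (-1) * (-1)^s * (blade_sign ?B {j} * grade s v ?B)) / 2)"
    unfolding cdot_def clmul_evec_left clmul_evec_right using True by simp
  also have "\<dots> = (blade_sign {j} ?B * v ?B + (-1) * ((-1)^card ?B * blade_sign ?B {j}) * v ?B) / 2"
    by (subst sum_over_grades[OF cb]) (simp add: algebra_simps)
  also have "\<dots> = (blade_sign {j} ?B - shuffle_sign j ?B) * v ?B / 2"
    unfolding blade_sign_evec_right[OF fin] by (simp add: algebra_simps)
  finally have eq: "cdot m (evec j) v C = (blade_sign {j} ?B - shuffle_sign j ?B) * v ?B / 2" .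
  show ?thesis
  proof (cases "j \<in> C")
    case True
    hence "j \<notin> ?B" by auto
    thus ?thesis using eq True by (simp add: blade_sign_evec_left)
  next
    case False
    hence "j \<in> ?B" and Beq: "?B = insert j C" by auto
    thus ?thesis using eq False \<open>j < m \<and> C \<subseteq> {..<m}\<close> by (simp add: blade_sign_evec_left shuffle_sign_insert_self)
  qed
next
  case False
  have nc: "\<not> (j < m \<and> C \<subseteq> {..<m} \<and> j \<notin> C)" using False by blast
  show ?thesis unfolding cdot_def clmul_evec_left clmul_evec_right if_not_P[OF False] if_not_P[OF nc] by simp
qed

lemma cwedge_evec: "cwedge m (evec j) v C =
   (if j < m \<and> C \<subseteq> {..<m} \<and> j \<in> C then shuffle_sign j C * v (C - {j}) else (0::'a::field_char_0))"
proof (cases "j < m \<and> C \<subseteq> {..<m}")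
  case True
  let ?B = "(C - {j}) \<union> ({j} - C)"
  have sub: "?B \<subseteq> {..<m}" using True by auto
  hence fin: "finite ?B" by (rule finite_subset) simp
  have cb: "card ?B \<le> m" using card_mono[OF _ sub] by simp
  have "cwedge m (evec j) v C = (\<Sum>s\<le>m. (blade_sign {j} ?B * grade s v ?B + 1 * (-1)^s * (blade_sign ?B {j} * grade s v ?B)) / 2)"
    unfolding cwedge_def clmul_evec_left clmul_evec_right using True by simp
  also have "\<dots> = (blade_sign {j} ?B * v ?B + 1 * ((-1)^card ?B * blade_sign ?B {j}) * v ?B) / 2"
    by (subst sum_over_grades[OF cb]) (simp add: algebra_simps)
  also have "\<dots> = (blade_sign {j} ?B + shuffle_sign j ?B) * v ?B / 2"
    unfolding blade_sign_evec_right[OF fin] by (simp add: algebra_simps)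
  finally have eq: "cwedge m (evec j) v C = (blade_sign {j} ?B + shuffle_sign j ?B) * v ?B / 2" .
  show ?thesis
  proof (cases "j \<in> C")
    case True
    hence "j \<notin> ?B" and Beq: "?B = C - {j}" by auto
    thus ?thesis using eq True \<open>j < m \<and> C \<subseteq> {..<m}\<close> by (simp add: blade_sign_evec_left shuffle_sign_remove_self)
  next
    case False
    hence "j \<in> ?B" by auto
    thus ?thesis using eq False by (simp add: blade_sign_evec_left)
  qed
next
  case False
  have nc: "\<not> (j < m \<and> C \<subseteq> {..<m} \<and> j \<in> C)" using False by blast
  show ?thesis unfolding cwedge_def clmul_evec_left clmul_evec_right if_not_P[OF False] if_not_P[OF nc] by simp
qed

lemma dplus_coeff: "dplus m P \<alpha> C = (\<Sum>j<m. if C \<subseteq> {..<m} \<and> j \<in> C then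
   shuffle_sign j C * (of_nat (Suc (\<alpha> j)) * P (\<alpha>(j := Suc (\<alpha> j))) (C - {j})) else (0::'a::field_char_0))"
  unfolding dplus_def by (rule sum.cong) (simp_all add: cwedge_evec pdx_def)

lemma xdot_coeff: "xdot m P \<alpha> C = (\<Sum>j<m. if C \<subseteq> {..<m} \<and> j \<notin> C \<and> 0 < \<alpha> j then
   - shuffle_sign j C * P (\<alpha>(j := \<alpha> j - 1)) (insert j C) else (0::'a::field_char_0))"
proof -
  have e: "{j. j < m \<and> 0 < \<alpha> j} = {j\<in>{..<m}. 0 < \<alpha> j}" by auto
  show ?thesis unfolding xdot_def e sum.inter_filter[OF finite_lessThan]
    by (rule sum.cong) (simp_all add: cdot_evec)
qed

lemma shuffle_sign_remove: "finite C \<Longrightarrow> i \<in> C \<Longrightarrow> shuffle_sign j (C - {i}) = (if i < j then - shuffle_sign j C else (shuffle_sign j C::'a::field_char_0))"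
proof -
  assume f: "finite C" and i: "i \<in> C"
  have e: "{b\<in>C - {i}. b < j} = {b\<in>C. b < j} - {i}" by auto
  show ?thesis
  proof (cases "i < j")
    case True
    hence "i \<in> {b\<in>C. b < j}" using i by auto
    moreover have "finite {b\<in>C. b < j}" using f by auto
    ultimately have c: "card {b\<in>C - {i}. b < j} = card {b\<in>C. b < j} - 1" and p: "card {b\<in>C. b < j} > 0"
      unfolding e by (auto simp: card_gt_0_iff)
    then obtain n where "card {b\<in>C. b < j} = Suc n" by (cases "card {b\<in>C. b < j}") auto
    thus ?thesis using True c unfolding shuffle_sign_def by simp
  next
    case False
    hence "{b\<in>C - {i}. b < j} = {b\<in>C. b < j}" by auto
    thus ?thesis using False unfolding shuffle_sign_def by simp
  qed
qed

lemma shuffle_sign_insert: "finite C \<Longrightarrow> i \<notin> C \<Longrightarrow> shuffle_sign j (insert i C) = (if i < j then - shuffle_sign j C else (shuffle_sign j C::'a::field_char_0))"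
proof -
  assume f: "finite C" and i: "i \<notin> C"
  show ?thesis
  proof (cases "i < j")
    case True
    hence "{b\<in>insert i C. b < j} = insert i {b\<in>C. b < j}" by auto
    moreover have "finite {b\<in>C. b < j}" using f by auto
    ultimately have "card {b\<in>insert i C. b < j} = Suc (card {b\<in>C. b < j})" using i by simp
    thus ?thesis using True unfolding shuffle_sign_def by simp
  next
    case False
    hence "{b\<in>insert i C. b < j} = {b\<in>C. b < j}" by auto
    thus ?thesis using False unfolding shuffle_sign_def by simp
  qed
qed

lemma shuffle_sign_square: "shuffle_sign j C * shuffle_sign j C = (1::'a::field_char_0)"
  unfolding shuffle_sign_def by (simp add: power_mult_distrib[symmetric])

lemma shuffle_sign_swap_remove: "finite C \<Longrightarrow> i \<in> C \<Longrightarrow> j \<in> C \<Longrightarrow> i \<noteq> j \<Longrightarrow>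
  shuffle_sign i C * shuffle_sign j (C - {i}) = - (shuffle_sign j C * (shuffle_sign i (C - {j})::'a::field_char_0))"
proof -
  assume a: "finite C" "i \<in> C" "j \<in> C" "i \<noteq> j"
  note sign_steps = shuffle_sign_remove[OF a(1,2), of j, where 'a='a] shuffle_sign_remove[OF a(1,3), of i, where 'a='a]
  show ?thesis
  proof (cases "i < j")
    case True
    hence "\<not> j < i" by simp
    thus ?thesis using sign_steps True by simp
  next
    case False
    hence "j < i" using a by simp
    thus ?thesis using sign_steps False by simp
  qed
qed

lemma shuffle_sign_swap_insert: "finite C \<Longrightarrow> i \<notin> C \<Longrightarrow> j \<notin> C \<Longrightarrow> i \<noteq> j \<Longrightarrow>
  shuffle_sign i C * shuffle_sign j (insert i C) = - (shuffle_sign j C * (shuffle_sign i (insert j C)::'a::field_char_0))"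
proof -
  assume a: "finite C" "i \<notin> C" "j \<notin> C" "i \<noteq> j"
  note sign_steps = shuffle_sign_insert[OF a(1,2), of j, where 'a='a] shuffle_sign_insert[OF a(1,3), of i, where 'a='a]
  show ?thesis
  proof (cases "i < j")
    case True
    hence "\<not> j < i" by simp
    thus ?thesis using sign_steps True by simp
  next
    case False
    hence "j < i" using a by simp
    thus ?thesis using sign_steps False by simp
  qed
qed

lemma shuffle_sign_swap_mixed: "finite C \<Longrightarrow> j \<in> C \<Longrightarrow> l \<notin> C \<Longrightarrow>
  shuffle_sign j C * shuffle_sign l (C - {j}) = - (shuffle_sign l C * (shuffle_sign j (insert l C)::'a::field_char_0))"
proof -
  assume a: "finite C" "j \<in> C" "l \<notin> C"
  hence ne: "j \<noteq> l" by auto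
  note sign_steps = shuffle_sign_remove[OF a(1,2), of l, where 'a='a] shuffle_sign_insert[OF a(1,3), of j, where 'a='a]
  show ?thesis
  proof (cases "j < l")
    case True
    hence "\<not> l < j" by simp
    thus ?thesis using sign_steps True by simp
  next
    case False
    hence "l < j" using ne by simp
    thus ?thesis using sign_steps False by simp
  qed
qed

lemma double_sum_antisym:
  assumes "\<And>i j. i \<in> A \<Longrightarrow> j \<in> A \<Longrightarrow> T i j = - T j i"
  shows "(\<Sum>i\<in>A. \<Sum>j\<in>A. T i j) = (0::'a::field_char_0)"
proof -
  let ?S = "\<Sum>i\<in>A. \<Sum>j\<in>A. T i j"
  have "?S = (\<Sum>i\<in>A. \<Sum>j\<in>A. - T j i)"
    by (intro sum.cong refl) (rule assms)
  also have "\<dots> = - (\<Sum>i\<in>A. \<Sum>j\<in>A. T j i)" by (simp add: sum_negf)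
  also have "(\<Sum>i\<in>A. \<Sum>j\<in>A. T j i) = ?S" by (rule sum.swap)
  finally have self_neg: "?S = - ?S" .
  have "?S + ?S = 0" using self_neg by (metis add.right_inverse)
  hence "2 * ?S = 0" by (simp only: mult_2)
  thus ?thesis by simp
qed

lemma if_mult_sum: "(if c then a * sum (\<lambda>l. if d l then g l else 0) L else (0::'a::comm_ring))
   = sum (\<lambda>l. if c \<and> d l then a * g l else 0) L"
proof (cases c)
  case True
  have "a * sum (\<lambda>l. if d l then g l else 0) L = sum (\<lambda>l. a * (if d l then g l else 0)) L"
    by (rule sum_distrib_left)
  also have "\<dots> = sum (\<lambda>l. if c \<and> d l then a * g l else 0) L"
    by (rule sum.cong) (simp_all add: True)
  finally show ?thesis using True by simp
qed simp

lemma if_mult_mult_sum: "(if c then a * (b * sum (\<lambda>l. if d l then g l else 0) L) else (0::'a::comm_ring))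
   = sum (\<lambda>l. if c \<and> d l then a * (b * g l) else 0) L"
proof (cases c)
  case True
  have "a * (b * sum (\<lambda>l. if d l then g l else 0) L) = sum (\<lambda>l. a * (b * (if d l then g l else 0))) L"
    by (simp add: sum_distrib_left)
  also have "\<dots> = sum (\<lambda>l. if c \<and> d l then a * (b * g l) else 0) L"
    by (rule sum.cong) (simp_all add: True)
  finally show ?thesis using True by simp
qed simp

lemma shuffle_sign_cancel: "shuffle_sign j C * (shuffle_sign j C * x) = (x::'a::field_char_0)"
  by (simp add: mult.assoc[symmetric] shuffle_sign_square)

(* \<partial>\<^sup>+ \<partial>\<^sup>+ = 0: the terms for the index pairs (i, j) and (j, i) cancel. *)
lemma dplus_dplus: "dplus m (dplus m P) \<alpha> C = (0::'a::field_char_0)"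
proof -
  define X where "X i j = of_nat (Suc (\<alpha> i)) * of_nat (Suc (\<alpha> j)) *
     P (\<alpha>(i := Suc (\<alpha> i), j := Suc (\<alpha> j))) (C - {i} - {j})" for i j
  define T where "T i j = (if C \<subseteq> {..<m} \<and> i \<in> C \<and> j \<in> C \<and> i \<noteq> j then
     shuffle_sign i C * shuffle_sign j (C - {i}) * X i j else (0::'a))" for i j
  have flatten: "dplus m (dplus m P) \<alpha> C = (\<Sum>i<m. \<Sum>j<m. T i j)"
    unfolding dplus_coeff[of m "dplus m P"] dplus_coeff[of m P] if_mult_mult_sum
    by (intro sum.cong refl) (auto simp: T_def X_def mult_ac)
  have antisym: "T i j = - T j i" for i j
  proof (cases "C \<subseteq> {..<m} \<and> i \<in> C \<and> j \<in> C \<and> i \<noteq> j")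
    case True
    hence f: "finite C" using finite_subset by blast
    have sign: "shuffle_sign i C * shuffle_sign j (C - {i}) = - (shuffle_sign j C * (shuffle_sign i (C - {j})::'a))"
      using shuffle_sign_swap_remove[OF f] True by blast
    have coeff: "X i j = X j i" unfolding X_def using True
      by (simp add: fun_upd_twist Diff_insert2[symmetric] insert_commute mult_ac)
    show ?thesis unfolding T_def using True sign coeff by auto
  next
    case False
    thus ?thesis unfolding T_def by auto
  qed
  show ?thesis unfolding flatten by (rule double_sum_antisym) (rule antisym)
qed

(* (x\<bullet>)(x\<bullet>) = 0, by the same cancellation. *)
lemma xdot_xdot: "xdot m (xdot m P) \<alpha> C = (0::'a::field_char_0)"
proof -
  define Y where "Y i j = P (\<alpha>(i := \<alpha> i - 1, j := \<alpha> j - 1)) (insert j (insert i C))" for i j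
  define T where "T i j = (if C \<subseteq> {..<m} \<and> i \<notin> C \<and> j \<notin> C \<and> i \<noteq> j \<and> 0 < \<alpha> i \<and> 0 < \<alpha> j then
     shuffle_sign i C * shuffle_sign j (insert i C) * Y i j else (0::'a))" for i j
  have flatten: "xdot m (xdot m P) \<alpha> C = (\<Sum>i<m. \<Sum>j<m. T i j)"
    unfolding xdot_coeff[of m "xdot m P"] xdot_coeff[of m P] if_mult_sum
    by (intro sum.cong refl) (auto simp: T_def Y_def mult_ac)
  have antisym: "T i j = - T j i" for i j
  proof (cases "C \<subseteq> {..<m} \<and> i \<notin> C \<and> j \<notin> C \<and> i \<noteq> j \<and> 0 < \<alpha> i \<and> 0 < \<alpha> j")
    case True
    hence f: "finite C" using finite_subset by blast
    have sign: "shuffle_sign i C * shuffle_sign j (insert i C) = - (shuffle_sign j C * (shuffle_sign i (insert j C)::'a))"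
      using shuffle_sign_swap_insert[OF f] True by blast
    have coeff: "Y i j = Y j i" unfolding Y_def using True
      by (simp add: fun_upd_twist insert_commute)
    show ?thesis unfolding T_def using True sign coeff by auto
  next
    case False
    thus ?thesis unfolding T_def by auto
  qed
  show ?thesis unfolding flatten by (rule double_sum_antisym) (rule antisym)
qed

(* The (j, l) summand of \<partial>\<^sup>+(x\<bullet>) + (x\<bullet>)\<partial>\<^sup>+: off-diagonal terms cancel, the diagonal
     term multiplies the coefficient of x^\<alpha> e_C by -(\<alpha>_j + [j \<in> C]). *)
lemma anticomm_summand:
  assumes Cm: "C \<subseteq> {..<m}" and jm: "j < m" and lm: "l < m"
  shows "(if (C \<subseteq> {..<m} \<and> j \<in> C) \<and> (C - {j} \<subseteq> {..<m} \<and> l \<notin> C - {j} \<and> 0 < (\<alpha>(j := Suc (\<alpha> j))) l)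
     then shuffle_sign j C * (of_nat (Suc (\<alpha> j)) * (- shuffle_sign l (C - {j}) *
        P ((\<alpha>(j := Suc (\<alpha> j)))(l := (\<alpha>(j := Suc (\<alpha> j))) l - 1)) (insert l (C - {j})))) else 0)
   + (if (C \<subseteq> {..<m} \<and> l \<notin> C \<and> 0 < \<alpha> l) \<and> (insert l C \<subseteq> {..<m} \<and> j \<in> insert l C)
     then - shuffle_sign l C * (shuffle_sign j (insert l C) * (of_nat (Suc ((\<alpha>(l := \<alpha> l - 1)) j)) *
        P ((\<alpha>(l := \<alpha> l - 1))(j := Suc ((\<alpha>(l := \<alpha> l - 1)) j))) (insert l C - {j}))) else 0)
   = (if l = j then - (if j \<in> C then of_nat (Suc (\<alpha> j)) else of_nat (\<alpha> j)) * P \<alpha> C else (0::'a::field_char_0))"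
proof -
  have f: "finite C" using Cm finite_subset by blast
  show ?thesis
  proof (cases "l = j")
    case True
    show ?thesis
    proof (cases "j \<in> C")
      case jC: True
      have "C - {j} \<subseteq> {..<m}" using Cm by auto
      thus ?thesis using True jC Cm by (simp add: shuffle_sign_remove_self insert_absorb algebra_simps shuffle_sign_cancel shuffle_sign_square)
    next
      case jC: False
      have "shuffle_sign j C * shuffle_sign j C = (1::'a)" by (rule shuffle_sign_square)
      moreover have "\<alpha> j > 0 \<Longrightarrow> \<alpha>(j := \<alpha> j) = \<alpha>" by simp
      ultimately show ?thesis using True jC Cm jm by (auto simp: shuffle_sign_insert_self algebra_simps)
    qed
  next
    case ne: False
    show ?thesis
    proof (cases "j \<in> C \<and> l \<notin> C \<and> 0 < \<alpha> l \<and> l < m")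
      case True
      let ?Z = "P (\<alpha>(j := Suc (\<alpha> j), l := \<alpha> l - 1)) (insert l (C - {j}))"
      let ?a = "of_nat (Suc (\<alpha> j)) :: 'a"
      have upd_swap: "\<alpha>(l := \<alpha> l - 1, j := Suc (\<alpha> j)) = \<alpha>(j := Suc (\<alpha> j), l := \<alpha> l - 1)"
        using ne by (rule fun_upd_twist)
      have set_swap: "insert l C - {j} = insert l (C - {j})" using ne by auto
      have sign: "shuffle_sign j C * shuffle_sign l (C - {j}) = - (shuffle_sign l C * (shuffle_sign j (insert l C)::'a))"
        using shuffle_sign_swap_mixed[OF f] True by blast
      have factor: "shuffle_sign j C * (?a * (- shuffle_sign l (C - {j}) * ?Z)) + - shuffle_sign l C * (shuffle_sign j (insert l C) * (?a * ?Z))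
          = - (?a * ?Z) * (shuffle_sign j C * shuffle_sign l (C - {j}) + shuffle_sign l C * shuffle_sign j (insert l C))"
        by (simp add: algebra_simps)
      also have "\<dots> = 0" using sign by simp
      finally have cancel: "shuffle_sign j C * (?a * (- shuffle_sign l (C - {j}) * ?Z)) + - shuffle_sign l C * (shuffle_sign j (insert l C) * (?a * ?Z)) = 0" .
      have "C - {j} \<subseteq> {..<m}" using Cm by auto
      thus ?thesis using True ne Cm cancel upd_swap set_swap by (simp add: insert_subset)
    next
      case False
      thus ?thesis using ne Cm lm by auto
    qed
  qed
qed

lemma sum_grade_degree:
  fixes \<alpha> :: "nat \<Rightarrow> nat"
  assumes "C \<subseteq> {..<m}"
  shows "(\<Sum>j<m. (if j \<in> C then of_nat (Suc (\<alpha> j)) else of_nat (\<alpha> j)) :: 'a::field_char_0)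
     = of_nat (card C) + of_nat (\<Sum>j<m. \<alpha> j)"
proof -
  have "(\<Sum>j<m. (if j \<in> C then of_nat (Suc (\<alpha> j)) else of_nat (\<alpha> j)) :: 'a)
     = (\<Sum>j<m. (if j \<in> C then 1 else 0) + of_nat (\<alpha> j))"
    by (rule sum.cong) auto
  also have "\<dots> = (\<Sum>j<m. (if j \<in> C then 1 else 0)) + (\<Sum>j<m. of_nat (\<alpha> j))"
    by (simp add: sum.distrib)
  also have "(\<Sum>j<m. (if j \<in> C then 1 else 0)::'a) = of_nat (card ({..<m} \<inter> C))"
    by (simp add: sum.inter_restrict[OF finite_lessThan, symmetric])
  also have "{..<m} \<inter> C = C" using assms by auto
  finally show ?thesis by (simp add: of_nat_sum)
qed

lemma dplus_xdot_anticomm: "dplus m (xdot m P) \<alpha> C + xdot m (dplus m P) \<alpha> C =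
   (if C \<subseteq> {..<m} then - (of_nat (card C) + of_nat (\<Sum>j<m. \<alpha> j)) * P \<alpha> C else (0::'a::field_char_0))"
proof -
  define F1 where "F1 j l = (if (C \<subseteq> {..<m} \<and> j \<in> C) \<and> (C - {j} \<subseteq> {..<m} \<and> l \<notin> C - {j} \<and> 0 < (\<alpha>(j := Suc (\<alpha> j))) l)
     then shuffle_sign j C * (of_nat (Suc (\<alpha> j)) * (- shuffle_sign l (C - {j}) *
        P ((\<alpha>(j := Suc (\<alpha> j)))(l := (\<alpha>(j := Suc (\<alpha> j))) l - 1)) (insert l (C - {j})))) else (0::'a))" for j l
  define F2 where "F2 l j = (if (C \<subseteq> {..<m} \<and> l \<notin> C \<and> 0 < \<alpha> l) \<and> (insert l C \<subseteq> {..<m} \<and> j \<in> insert l C)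
     then - shuffle_sign l C * (shuffle_sign j (insert l C) * (of_nat (Suc ((\<alpha>(l := \<alpha> l - 1)) j)) *
        P ((\<alpha>(l := \<alpha> l - 1))(j := Suc ((\<alpha>(l := \<alpha> l - 1)) j))) (insert l C - {j}))) else (0::'a))" for l j
  have dx: "dplus m (xdot m P) \<alpha> C = (\<Sum>j<m. \<Sum>l<m. F1 j l)"
    unfolding dplus_coeff[of m "xdot m P"] xdot_coeff[of m P] if_mult_mult_sum F1_def by (rule refl)
  have xd: "xdot m (dplus m P) \<alpha> C = (\<Sum>l<m. \<Sum>j<m. F2 l j)"
    unfolding xdot_coeff[of m "dplus m P"] dplus_coeff[of m P] if_mult_sum F2_def by (rule refl)
  have swap: "(\<Sum>l<m. \<Sum>j<m. F2 l j) = (\<Sum>j<m. \<Sum>l<m. F2 l j)" by (rule sum.swap)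
  have combined: "dplus m (xdot m P) \<alpha> C + xdot m (dplus m P) \<alpha> C = (\<Sum>j<m. \<Sum>l<m. F1 j l + F2 l j)"
    unfolding dx xd swap by (simp add: sum.distrib)
  show ?thesis
  proof (cases "C \<subseteq> {..<m}")
    case True
    have "(\<Sum>j<m. \<Sum>l<m. F1 j l + F2 l j) = (\<Sum>j<m. \<Sum>l<m. if l = j then
       - (if j \<in> C then of_nat (Suc (\<alpha> j)) else of_nat (\<alpha> j)) * P \<alpha> C else 0)"
      unfolding F1_def F2_def by (intro sum.cong refl) (rule anticomm_summand[OF True], simp_all)
    also have "\<dots> = (\<Sum>j<m. - (if j \<in> C then of_nat (Suc (\<alpha> j)) else of_nat (\<alpha> j)) * P \<alpha> C)"
      by (rule sum.cong) simp_all
    also have "\<dots> = - (\<Sum>j<m. (if j \<in> C then of_nat (Suc (\<alpha> j)) else of_nat (\<alpha> j))) * P \<alpha> C"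
      by (simp add: sum_distrib_right sum_negf)
    also have "\<dots> = - (of_nat (card C) + of_nat (\<Sum>j<m. \<alpha> j)) * P \<alpha> C"
      by (simp only: sum_grade_degree[OF True])
    finally show ?thesis using combined True by simp
  next
    case False
    have "(\<Sum>j<m. \<Sum>l<m. F1 j l + F2 l j) = 0"
      unfolding F1_def F2_def using False by simp
    thus ?thesis using combined False by simp
  qed
qed

lemma sum_fun_upd: "j < (m::nat) \<Longrightarrow> (\<Sum>i<m. (\<alpha>(j:=v)) i) + \<alpha> j = (\<Sum>i<m. \<alpha> i) + (v::nat)"
proof -
  assume j: "j < m"
  have a: "(\<Sum>i<m. (\<alpha>(j:=v)) i) = (\<alpha>(j:=v)) j + (\<Sum>i\<in>{..<m}-{j}. (\<alpha>(j:=v)) i)"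
    by (rule sum.remove) (use j in auto)
  have b: "(\<Sum>i\<in>{..<m}-{j}. (\<alpha>(j:=v)) i) = (\<Sum>i\<in>{..<m}-{j}. \<alpha> i)" by (rule sum.cong) auto
  have c: "(\<Sum>i<m. \<alpha> i) = \<alpha> j + (\<Sum>i\<in>{..<m}-{j}. \<alpha> i)"
    by (rule sum.remove) (use j in auto)
  show ?thesis using a b c by simp
qed

lemma dplus_hpoly:
  assumes P: "P \<in> hpoly m k s"
  shows "dplus m P \<in> (hpoly m (k - 1) (Suc s) :: 'a::field_char_0 cpoly set)"
  unfolding hpoly_def
proof (intro CollectI allI impI)
  fix \<alpha> A assume nz: "dplus m P \<alpha> A \<noteq> 0"
  then obtain j where j: "j \<in> {..<m}" and nz2: "(if A \<subseteq> {..<m} \<and> j \<in> A then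
      shuffle_sign j A * (of_nat (Suc (\<alpha> j)) * P (\<alpha>(j := Suc (\<alpha> j))) (A - {j})) else (0::'a)) \<noteq> 0"
    unfolding dplus_coeff by (blast dest: sum.not_neutral_contains_not_neutral)
  hence A: "A \<subseteq> {..<m}" "j \<in> A" and Pnz: "P (\<alpha>(j := Suc (\<alpha> j))) (A - {j}) \<noteq> 0"
    by (auto split: if_splits)
  from P Pnz have h: "0 \<le> k" "\<forall>i. m \<le> i \<longrightarrow> (\<alpha>(j := Suc (\<alpha> j))) i = 0"
    "(\<Sum>i<m. (\<alpha>(j := Suc (\<alpha> j))) i) = nat k" "card (A - {j}) = s"
    unfolding hpoly_def by blast+
  have jm: "j < m" using j by simp
  have sm: "(\<Sum>i<m. \<alpha> i) + 1 = nat k" using sum_fun_upd[OF jm, of \<alpha> "Suc (\<alpha> j)"] h(3) by simp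
  have fA: "finite A" using A(1) finite_subset by blast
  have cA: "card A = Suc s" using card.remove[OF fA A(2)] h(4) by simp
  have z: "\<forall>i. m \<le> i \<longrightarrow> \<alpha> i = 0"
  proof (intro allI impI)
    fix i assume "m \<le> i"
    hence "i \<noteq> j" using jm by simp
    thus "\<alpha> i = 0" using h(2) \<open>m \<le> i\<close> by auto
  qed
  have k1: "0 \<le> k - 1" using sm by linarith
  have k2: "(\<Sum>i<m. \<alpha> i) = nat (k - 1)" using sm by linarith
  show "0 \<le> k - 1 \<and> (\<forall>i. m \<le> i \<longrightarrow> \<alpha> i = 0) \<and> (\<Sum>i<m. \<alpha> i) = nat (k - 1) \<and> A \<subseteq> {..<m} \<and> card A = Suc s"
    using k1 z k2 A(1) cA by blast
qed

lemma xdot_hpoly: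
  assumes P: "P \<in> hpoly m (k - 1) (Suc s)"
  shows "xdot m P \<in> (hpoly m k s :: 'a::field_char_0 cpoly set)"
  unfolding hpoly_def
proof (intro CollectI allI impI)
  fix \<alpha> A assume nz: "xdot m P \<alpha> A \<noteq> 0"
  then obtain j where j: "j \<in> {..<m}" and nz2: "(if A \<subseteq> {..<m} \<and> j \<notin> A \<and> 0 < \<alpha> j then
      - shuffle_sign j A * P (\<alpha>(j := \<alpha> j - 1)) (insert j A) else (0::'a)) \<noteq> 0"
    unfolding xdot_coeff by (blast dest: sum.not_neutral_contains_not_neutral)
  hence A: "A \<subseteq> {..<m}" "j \<notin> A" "0 < \<alpha> j" and Pnz: "P (\<alpha>(j := \<alpha> j - 1)) (insert j A) \<noteq> 0"
    by (auto split: if_splits)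
  from P Pnz have h: "0 \<le> k - 1" "\<forall>i. m \<le> i \<longrightarrow> (\<alpha>(j := \<alpha> j - 1)) i = 0"
    "(\<Sum>i<m. (\<alpha>(j := \<alpha> j - 1)) i) = nat (k - 1)" "card (insert j A) = Suc s"
    unfolding hpoly_def by blast+
  have jm: "j < m" using j by simp
  have sm: "(\<Sum>i<m. \<alpha> i) = nat (k - 1) + 1" using sum_fun_upd[OF jm, of \<alpha> "\<alpha> j - 1"] h(3) A(3) by simp
  have fA: "finite A" using A(1) finite_subset by blast
  have cA: "card A = s" using h(4) fA A(2) by simp
  have z: "\<forall>i. m \<le> i \<longrightarrow> \<alpha> i = 0"
  proof (intro allI impI)
    fix i assume "m \<le> i"
    hence "i \<noteq> j" using jm by simp
    thus "\<alpha> i = 0" using h(2) \<open>m \<le> i\<close> by auto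
  qed
  have k1: "0 \<le> k" using h(1) by linarith
  have k2: "(\<Sum>i<m. \<alpha> i) = nat k" using sm h(1) by linarith
  show "0 \<le> k \<and> (\<forall>i. m \<le> i \<longrightarrow> \<alpha> i = 0) \<and> (\<Sum>i<m. \<alpha> i) = nat k \<and> A \<subseteq> {..<m} \<and> card A = s"
    using k1 z k2 A(1) cA by blast
qed

lemma hpoly_add_scaled:
  assumes "P \<in> hpoly m k s" "Q \<in> hpoly m k s"
  shows "(\<lambda>\<alpha> A. P \<alpha> A + c * Q \<alpha> A) \<in> (hpoly m k s :: 'a::field_char_0 cpoly set)"
  unfolding hpoly_def
proof (intro CollectI allI impI)
  fix \<alpha> A assume "P \<alpha> A + c * Q \<alpha> A \<noteq> 0"
  hence "P \<alpha> A \<noteq> 0 \<or> Q \<alpha> A \<noteq> 0" by auto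
  thus "0 \<le> k \<and> (\<forall>i. m \<le> i \<longrightarrow> \<alpha> i = 0) \<and> (\<Sum>i<m. \<alpha> i) = nat k \<and> A \<subseteq> {..<m} \<and> card A = s"
    using assms unfolding hpoly_def by blast
qed

lemma hpoly_scale:
  assumes "Q \<in> hpoly m k s"
  shows "(\<lambda>\<alpha> A. c * Q \<alpha> A) \<in> (hpoly m k s :: 'a::field_char_0 cpoly set)"
  unfolding hpoly_def
proof (intro CollectI allI impI)
  fix \<alpha> A assume "c * Q \<alpha> A \<noteq> 0"
  hence "Q \<alpha> A \<noteq> 0" by auto
  thus "0 \<le> k \<and> (\<forall>i. m \<le> i \<longrightarrow> \<alpha> i = 0) \<and> (\<Sum>i<m. \<alpha> i) = nat k \<and> A \<subseteq> {..<m} \<and> card A = s"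
    using assms unfolding hpoly_def by blast
qed

lemma dplus_scale: "dplus m (\<lambda>\<alpha> A. c * P \<alpha> A) \<alpha> C = c * (dplus m P \<alpha> C :: 'a::field_char_0)"
  unfolding dplus_coeff sum_distrib_left by (rule sum.cong) (auto simp: mult_ac)

lemma xdot_scale: "xdot m (\<lambda>\<alpha> A. c * P \<alpha> A) \<alpha> C = c * (xdot m P \<alpha> C :: 'a::field_char_0)"
  unfolding xdot_coeff sum_distrib_left by (rule sum.cong) (auto simp: mult_ac)

lemma dplus_zero: "dplus m (\<lambda>\<alpha> A. 0) \<alpha> C = (0 :: 'a::field_char_0)"
  unfolding dplus_coeff by (simp cong: if_cong)

lemma xdot_zero: "xdot m (\<lambda>\<alpha> A. 0) \<alpha> C = (0 :: 'a::field_char_0)"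
  unfolding xdot_coeff by (simp cong: if_cong)

lemma euler_identity_hpoly:
  assumes P: "P \<in> hpoly m (int k) s"
  shows "dplus m (xdot m P) \<alpha> A + xdot m (dplus m P) \<alpha> A = - of_nat (s + k) * (P \<alpha> A :: 'a::field_char_0)"
proof (cases "P \<alpha> A = 0")
  case True
  thus ?thesis unfolding dplus_xdot_anticomm by simp
next
  case False
  with P have "A \<subseteq> {..<m}" "card A = s" "(\<Sum>i<m. \<alpha> i) = k" unfolding hpoly_def by auto
  thus ?thesis unfolding dplus_xdot_anticomm by simp
qed

lemma zero_in_kerplus: "(\<lambda>\<alpha> A. 0) \<in> (kerplus m k s :: 'a::field_char_0 cpoly set)"
  unfolding kerplus_def hpoly_def by (auto intro!: ext simp: dplus_zero)

(* Any multiple of \<partial>\<^sup>+P lies in the kernel of \<partial>\<^sup>+, by \<partial>\<^sup>+ \<partial>\<^sup>+ = 0. *)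
lemma scaled_dplus_kerplus:
  assumes "P \<in> hpoly m k s"
  shows "(\<lambda>\<alpha> A. c * dplus m P \<alpha> A) \<in> (kerplus m (k - 1) (Suc s) :: 'a::field_char_0 cpoly set)"
proof -
  have "(\<lambda>\<alpha> A. c * dplus m P \<alpha> A) \<in> hpoly m (k - 1) (Suc s)"
    by (rule hpoly_scale[OF dplus_hpoly[OF assms]])
  moreover have "dplus m (\<lambda>\<alpha> A. c * dplus m P \<alpha> A) = (\<lambda>\<alpha> A. 0)"
    by (intro ext) (simp only: dplus_scale dplus_dplus mult_zero_right)
  ultimately show ?thesis unfolding kerplus_def by simp
qed

definition plus_projection :: "nat \<Rightarrow> nat \<Rightarrow> nat \<Rightarrow> 'a::field_char_0 cpoly \<Rightarrow> 'a cpoly" where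
  "plus_projection m k s P = (\<lambda>\<alpha> A. - dplus m (xdot m P) \<alpha> A / of_nat (s + k))"

(* By the Euler-type identity, P - P\<^sup>+ = (x\<bullet>)R with R = -\<partial>\<^sup>+P/(s+k). *)
lemma plus_projection_complement:
  assumes P: "P \<in> (hpoly m (int k) s :: 'a::field_char_0 cpoly set)" and sk: "s + k \<noteq> 0"
  shows "(\<lambda>\<alpha> A. P \<alpha> A - plus_projection m k s P \<alpha> A)
    = xdot m (\<lambda>\<alpha> A. (- 1 / of_nat (s + k)) * dplus m P \<alpha> A)"
proof (intro ext)
  fix \<alpha> A
  define n where "n = (of_nat (s + k) :: 'a)"
  have n0: "n \<noteq> 0" unfolding n_def using sk of_nat_eq_0_iff by metis
  have euler: "dplus m (xdot m P) \<alpha> A = - n * P \<alpha> A - xdot m (dplus m P) \<alpha> A"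
    using euler_identity_hpoly[OF P, of \<alpha> A] unfolding n_def by (simp add: algebra_simps)
  have "P \<alpha> A - plus_projection m k s P \<alpha> A = (- 1 / n) * xdot m (dplus m P) \<alpha> A"
    unfolding plus_projection_def n_def[symmetric] euler using n0 by (simp add: field_simps)
  then show "P \<alpha> A - plus_projection m k s P \<alpha> A
      = xdot m (\<lambda>\<alpha> A. (- 1 / of_nat (s + k)) * dplus m P \<alpha> A) \<alpha> A"
    unfolding n_def by (simp only: xdot_scale)
qed

(* P\<^sup>+ lies in Ker_k^s \<partial>\<^sup>+: it is a multiple of \<partial>\<^sup>+(\<dots>), and it is P plus an element of
   (x\<bullet>)P_{k-1}^{s+1} \<subseteq> P_k^s. *)
lemma plus_projection_kerplus:
  assumes P: "P \<in> (hpoly m (int k) s :: 'a::field_char_0 cpoly set)" and sk: "s + k \<noteq> 0"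
  shows "plus_projection m k s P \<in> kerplus m (int k) s"
proof -
  define R where "R = (\<lambda>\<alpha> A. (- 1 / of_nat (s + k)) * dplus m P \<alpha> A :: 'a)"
  have "R \<in> hpoly m (int k - 1) (Suc s)"
    using scaled_dplus_kerplus[OF P] unfolding R_def kerplus_def by blast
  then have "xdot m R \<in> hpoly m (int k) s" by (rule xdot_hpoly)
  then have "(\<lambda>\<alpha> A. P \<alpha> A + (- 1) * xdot m R \<alpha> A) \<in> hpoly m (int k) s"
    by (rule hpoly_add_scaled[OF P])
  moreover have "plus_projection m k s P = (\<lambda>\<alpha> A. P \<alpha> A + (- 1) * xdot m R \<alpha> A)"
  proof (intro ext)
    fix \<alpha> A
    show "plus_projection m k s P \<alpha> A = P \<alpha> A + (- 1) * xdot m R \<alpha> A"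
      using fun_cong[OF fun_cong[OF plus_projection_complement[OF P sk]], of \<alpha> A]
      unfolding R_def by (simp add: algebra_simps)
  qed
  moreover have "dplus m (plus_projection m k s P) = (\<lambda>\<alpha> A. 0)"
  proof -
    have "plus_projection m k s P = (\<lambda>\<alpha> A. (- 1 / of_nat (s + k)) * dplus m (xdot m P) \<alpha> A)"
      unfolding plus_projection_def by (intro ext) simp
    then show ?thesis by (intro ext) (simp only: dplus_scale dplus_dplus mult_zero_right)
  qed
  ultimately show ?thesis unfolding kerplus_def by simp
qed

(* Directness: a polynomial in Ker_k^s \<partial>\<^sup>+ of the form (x\<bullet>)R vanishes, since
   -(s+k)Q = \<partial>\<^sup>+(x\<bullet>)Q + (x\<bullet>)\<partial>\<^sup>+Q = \<partial>\<^sup>+(x\<bullet>)(x\<bullet>)R + 0 = 0. *)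
lemma kerplus_xdot_image_zero:
  assumes Q: "Q \<in> (kerplus m (int k) s :: 'a::field_char_0 cpoly set)"
    and image: "Q = xdot m R" and sk: "s + k \<noteq> 0"
  shows "Q = (\<lambda>\<alpha> A. 0)"
proof (intro ext)
  fix \<alpha> A
  have QH: "Q \<in> hpoly m (int k) s" and Qker: "dplus m Q = (\<lambda>\<alpha> A. 0)"
    using Q unfolding kerplus_def by auto
  have "xdot m Q = (\<lambda>\<alpha> A. 0)" unfolding image by (intro ext) (rule xdot_xdot)
  define n where "n = (of_nat (s + k) :: 'a)"
  have "- n * Q \<alpha> A = 0"
    using euler_identity_hpoly[OF QH, of \<alpha> A] Qker \<open>xdot m Q = (\<lambda>\<alpha> A. 0)\<close>
    unfolding n_def[symmetric] by (simp add: dplus_zero xdot_zero)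
  moreover have "n \<noteq> 0" unfolding n_def using sk of_nat_eq_0_iff by metis
  ultimately show "Q \<alpha> A = 0" by simp
qed

lemma plus_projection_complement_image:
  assumes P: "P \<in> (hpoly m (int k) s :: 'a::field_char_0 cpoly set)" and sk: "s + k \<noteq> 0"
  shows "(\<lambda>\<alpha> A. P \<alpha> A - plus_projection m k s P \<alpha> A) \<in> xdot m ` kerplus m (int k - 1) (s + 1)"
proof -
  have "(\<lambda>\<alpha> A. (- 1 / of_nat (s + k)) * dplus m P \<alpha> A) \<in> kerplus m (int k - 1) (s + 1)"
    using scaled_dplus_kerplus[OF P, of "- 1 / of_nat (s + k)"] by (simp only: Suc_eq_plus1)
  then show ?thesis unfolding plus_projection_complement[OF P sk] by (rule imageI)
qed

lemma hpoly_decomposition: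
  assumes P: "P \<in> (hpoly m (int k) s :: 'a::field_char_0 cpoly set)" and sk: "s + k \<noteq> 0"
  shows "\<exists>Q \<in> kerplus m (int k) s. \<exists>R \<in> kerplus m (int k - 1) (s + 1).
    P = (\<lambda>\<alpha> A. Q \<alpha> A + xdot m R \<alpha> A)"
proof -
  obtain R where R: "R \<in> kerplus m (int k - 1) (s + 1)"
    and diff: "(\<lambda>\<alpha> A. P \<alpha> A - plus_projection m k s P \<alpha> A) = xdot m R"
    using plus_projection_complement_image[OF P sk] by blast
  have "P = (\<lambda>\<alpha> A. plus_projection m k s P \<alpha> A + xdot m R \<alpha> A)"
  proof (intro ext)
    fix \<alpha> A
    show "P \<alpha> A = plus_projection m k s P \<alpha> A + xdot m R \<alpha> A"
      using fun_cong[OF fun_cong[OF diff, of \<alpha>], of A] by (simp add: algebra_simps)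
  qed
  then show ?thesis using R plus_projection_kerplus[OF P sk] by blast
qed

lemma kerplus_inter_xdot_image:
  assumes "s + k \<noteq> 0"
  shows "kerplus m (int k) s \<inter> xdot m ` kerplus m (int k - 1) (s + 1) = {(\<lambda>\<alpha> A. 0) :: 'a::field_char_0 cpoly}"
  using kerplus_xdot_image_zero[OF _ _ assms] zero_in_kerplus xdot_zero by (fastforce intro!: ext)

theorem proposition1:
  fixes m k s :: nat
  assumes "2 \<le> m" and "s \<le> m" and "1 \<le> s + k"
  shows "kerplus m (int k) s \<subseteq> (hpoly m (int k) s :: 'a::field_char_0 cpoly set)
    \<and> xdot m ` kerplus m (int k - 1) (s + 1) \<subseteq> (hpoly m (int k) s :: 'a cpoly set)
    \<and> (\<forall>P \<in> (hpoly m (int k) s :: 'a cpoly set). \<exists>Q \<in> kerplus m (int k) s.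
         \<exists>R \<in> kerplus m (int k - 1) (s + 1). P = (\<lambda>\<alpha> A. Q \<alpha> A + xdot m R \<alpha> A))
    \<and> kerplus m (int k) s \<inter> xdot m ` kerplus m (int k - 1) (s + 1) = {(\<lambda>\<alpha> A. 0) :: 'a cpoly}
    \<and> (\<forall>P \<in> (hpoly m (int k) s :: 'a cpoly set).
         let Pp = (\<lambda>\<alpha> A. - dplus m (xdot m P) \<alpha> A / of_nat (s + k)) in
           Pp \<in> kerplus m (int k) s
           \<and> (\<lambda>\<alpha> A. P \<alpha> A - Pp \<alpha> A) \<in> xdot m ` kerplus m (int k - 1) (s + 1))"
proof -
  have sk: "s + k \<noteq> 0" using assms(3) by linarith
  have image_hpoly: "xdot m ` kerplus m (int k - 1) (s + 1) \<subseteq> (hpoly m (int k) s :: 'a cpoly set)"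
    using xdot_hpoly unfolding kerplus_def by force
  have kernel_hpoly: "kerplus m (int k) s \<subseteq> (hpoly m (int k) s :: 'a cpoly set)"
    unfolding kerplus_def by blast
  have projection: "let Pp = (\<lambda>\<alpha> A. - dplus m (xdot m P) \<alpha> A / of_nat (s + k)) in
      Pp \<in> kerplus m (int k) s \<and> (\<lambda>\<alpha> A. P \<alpha> A - Pp \<alpha> A) \<in> xdot m ` kerplus m (int k - 1) (s + 1)"
    if P: "P \<in> (hpoly m (int k) s :: 'a cpoly set)" for P
    using plus_projection_kerplus[OF P sk] plus_projection_complement_image[OF P sk]
    unfolding plus_projection_def Let_def by blast
  show ?thesis
    by (intro conjI ballI kernel_hpoly image_hpoly kerplus_inter_xdot_image[OF sk]
        hpoly_decomposition[OF _ sk] projection; assumption)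
qed

end
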